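(* Let $K$ be a field, $R$ an $\mathbb N$-graded $K$-algebra, and let $A=\sigma(R)\langle x_1,x_2\rangle$ be a connected graded quasi-commutative skew PBW extension of $R$. Then $A$ is a connected graded trimmed right double Ore extension of $R$.
   Context: All algebras are over a field $K$; a graded algebra $B$ is connected if $B_0=K$. A ring $A$ is a skew PBW extension of $R$ in $x_1,\dots,x_n$, written $\sigma(R)\langle x_1,\dots,x_n\rangle$, if $R\subseteq A$; $A$ is a free left $R$-module with basis the monomials $x_1^{\alpha_1}\cdots x_n^{\alpha_n}$; for each $i$ and $r\in R\setminus\{0\}$ there is $c_{i,r}\in R\setminus\{0\}$ with $x_ir-c_{i,r}x_i\in R$; and for all $i,j$ there is $c_{i,j}\in R\setminus\{0\}$ with $x_jx_i-c_{i,j}x_ix_j\in R+Rx_1+\cdots+Rx_n$. Then $x_ir=\sigma_i(r)x_i+\delta_i(r)$ with $\sigma_i$ an injective endomorphism and $\delta_i$ a $\sigma_i$-derivation. It is quasi-commutative if in fact $x_ir=c_{i,r}x_i$ and $x_jx_i=c_{i,j}x_ix_j$ (with $c_{i,r},c_{i,j}\in R\setminus\{0\}$). It is bijective if all $\sigma_i$ are bijective and all $c_{i,j}$ invertible. It is graded if it is bijective, $R$ is $\mathbb N$-graded, each $\sigma_i$ is graded, $\delta_i(R_m)\subseteq R_{m+1}$, and $x_jx_i-c_{i,j}x_ix_j\in R_2+R_1x_1+\cdots+R_1x_n$ with $c_{i,j}\in R_0$; the grading is $A_p=\mathrm{span}\{r_tx^\alpha: r_t\in R_t,\ t+|\alpha|=p\}$.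 A $K$-algebra $B\supseteq R$ is a right double Ore extension of $R$ if it is generated by $R$ and $x_1,x_2$; $x_2x_1=p_{12}x_1x_2+p_{11}x_1^2+\tau_1x_1+\tau_2x_2+\tau_0$ with $p_{12},p_{11}\in K$, $\tau_i\in R$; $B$ is a free left $R$-module with basis $\{x_1^ax_2^b\}$; and $x_1R+x_2R\subseteq Rx_1+Rx_2+R$. Writing $x_ir=\sigma_{i1}(r)x_1+\sigma_{i2}(r)x_2+\delta_i(r)$, it is trimmed if $\delta_1=\delta_2=0$ and $\tau_0=\tau_1=\tau_2=0$. It is graded if all relations are homogeneous with $\deg x_1=\deg x_2=1$. *)

theory Defs
  imports "HOL-Algebra.Algebra"
begin

text \<open>All objects live inside one ambient (not necessarily commutative)
ring A (a HOL-Algebra ring). The base field K is a subfield of A contained in the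
centre of A (this is what a K-algebra structure on the nonzero ring A amounts to),
and R is a subring of A containing K, i.e. a K-subalgebra.\<close>

definition K_algebra_ext :: "('a,'b) ring_scheme \<Rightarrow> 'a set \<Rightarrow> 'a set \<Rightarrow> bool" where
  "K_algebra_ext A K R \<longleftrightarrow> ring A \<and> subfield K A
     \<and> (\<forall>k\<in>K. \<forall>a\<in>carrier A. k \<otimes>\<^bsub>A\<^esub> a = a \<otimes>\<^bsub>A\<^esub> k)
     \<and> subring R A \<and> K \<subseteq> R"

definition Kspan :: "('a,'b) ring_scheme \<Rightarrow> 'a set \<Rightarrow> 'a set \<Rightarrow> 'a set" where
  "Kspan A K S = {finsum A (\<lambda>i. c i \<otimes>\<^bsub>A\<^esub> v i) I | (I :: nat set) c v.
                    finite I \<and> c \<in> I \<rightarrow> K \<and> v \<in> I \<rightarrow> S}"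

definition graded_alg :: "('a,'b) ring_scheme \<Rightarrow> 'a set \<Rightarrow> 'a set \<Rightarrow> (nat \<Rightarrow> 'a set) \<Rightarrow> bool" where
  "graded_alg A K R Rg \<longleftrightarrow>
     (\<forall>n. Rg n \<subseteq> R \<and> \<zero>\<^bsub>A\<^esub> \<in> Rg n
          \<and> (\<forall>a\<in>Rg n. \<forall>b\<in>Rg n. a \<oplus>\<^bsub>A\<^esub> b \<in> Rg n)
          \<and> (\<forall>k\<in>K. \<forall>a\<in>Rg n. k \<otimes>\<^bsub>A\<^esub> a \<in> Rg n))
   \<and> (\<forall>m n. \<forall>a\<in>Rg m. \<forall>b\<in>Rg n. a \<otimes>\<^bsub>A\<^esub> b \<in> Rg (m + n))
   \<and> (\<forall>r\<in>R. \<exists>!c. (\<forall>n. c n \<in> Rg n) \<and> finite {n. c n \<noteq> \<zero>\<^bsub>A\<^esub>}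
                 \<and> r = finsum A c {n. c n \<noteq> \<zero>\<^bsub>A\<^esub>})"

definition mono2 :: "('a,'b) ring_scheme \<Rightarrow> 'a \<Rightarrow> 'a \<Rightarrow> nat \<times> nat \<Rightarrow> 'a" where
  "mono2 A x1 x2 p = (x1 [^]\<^bsub>A\<^esub> fst p) \<otimes>\<^bsub>A\<^esub> (x2 [^]\<^bsub>A\<^esub> snd p)"

definition left_free_mono_basis :: "('a,'b) ring_scheme \<Rightarrow> 'a set \<Rightarrow> 'a \<Rightarrow> 'a \<Rightarrow> bool" where
  "left_free_mono_basis A R x1 x2 \<longleftrightarrow>
     (\<forall>z\<in>carrier A. \<exists>!c. c \<in> UNIV \<rightarrow> R \<and> finite {p. c p \<noteq> \<zero>\<^bsub>A\<^esub>}
          \<and> z = finsum A (\<lambda>p. c p \<otimes>\<^bsub>A\<^esub> mono2 A x1 x2 p) {p. c p \<noteq> \<zero>\<^bsub>A\<^esub>})"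

definition lmul :: "('a,'b) ring_scheme \<Rightarrow> 'a set \<Rightarrow> 'a \<Rightarrow> 'a set" where
  "lmul A S y = {s \<otimes>\<^bsub>A\<^esub> y | s. s \<in> S}"

definition sum3 :: "('a,'b) ring_scheme \<Rightarrow> 'a set \<Rightarrow> 'a set \<Rightarrow> 'a set \<Rightarrow> 'a set" where
  "sum3 A S T U = {a \<oplus>\<^bsub>A\<^esub> b \<oplus>\<^bsub>A\<^esub> c | a b c. a \<in> S \<and> b \<in> T \<and> c \<in> U}"

definition skew_PBW2 :: "('a,'b) ring_scheme \<Rightarrow> 'a set \<Rightarrow> 'a \<Rightarrow> 'a \<Rightarrow> bool" where
  "skew_PBW2 A R x1 x2 \<longleftrightarrow>
     subring R A \<and> x1 \<in> carrier A \<and> x2 \<in> carrier A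
   \<and> left_free_mono_basis A R x1 x2
   \<and> (\<forall>xi\<in>{x1, x2}. \<forall>r\<in>R - {\<zero>\<^bsub>A\<^esub>}. \<exists>c\<in>R - {\<zero>\<^bsub>A\<^esub>}.
          xi \<otimes>\<^bsub>A\<^esub> r \<ominus>\<^bsub>A\<^esub> c \<otimes>\<^bsub>A\<^esub> xi \<in> R)
   \<and> (\<forall>xi\<in>{x1, x2}. \<forall>xj\<in>{x1, x2}. \<exists>c\<in>R - {\<zero>\<^bsub>A\<^esub>}.
          xj \<otimes>\<^bsub>A\<^esub> xi \<ominus>\<^bsub>A\<^esub> c \<otimes>\<^bsub>A\<^esub> xi \<otimes>\<^bsub>A\<^esub> xj
            \<in> sum3 A R (lmul A R x1) (lmul A R x2))"

definition pbw_sigma :: "('a,'b) ring_scheme \<Rightarrow> 'a set \<Rightarrow> 'a \<Rightarrow> 'a \<Rightarrow> 'a" where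
  "pbw_sigma A R xi r = (THE s. s \<in> R \<and> xi \<otimes>\<^bsub>A\<^esub> r \<ominus>\<^bsub>A\<^esub> s \<otimes>\<^bsub>A\<^esub> xi \<in> R)"

definition pbw_delta :: "('a,'b) ring_scheme \<Rightarrow> 'a set \<Rightarrow> 'a \<Rightarrow> 'a \<Rightarrow> 'a" where
  "pbw_delta A R xi r = xi \<otimes>\<^bsub>A\<^esub> r \<ominus>\<^bsub>A\<^esub> pbw_sigma A R xi r \<otimes>\<^bsub>A\<^esub> xi"

definition quasi_commutative_PBW2 :: "('a,'b) ring_scheme \<Rightarrow> 'a set \<Rightarrow> 'a \<Rightarrow> 'a \<Rightarrow> bool" where
  "quasi_commutative_PBW2 A R x1 x2 \<longleftrightarrow> skew_PBW2 A R x1 x2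
   \<and> (\<forall>xi\<in>{x1, x2}. \<forall>r\<in>R - {\<zero>\<^bsub>A\<^esub>}. \<exists>c\<in>R - {\<zero>\<^bsub>A\<^esub>}.
          xi \<otimes>\<^bsub>A\<^esub> r = c \<otimes>\<^bsub>A\<^esub> xi)
   \<and> (\<forall>xi\<in>{x1, x2}. \<forall>xj\<in>{x1, x2}. \<exists>c\<in>R - {\<zero>\<^bsub>A\<^esub>}.
          xj \<otimes>\<^bsub>A\<^esub> xi = c \<otimes>\<^bsub>A\<^esub> xi \<otimes>\<^bsub>A\<^esub> xj)"

text \<open>Graded skew PBW extension (this includes bijectivity: sigma_i bijective
on R and the constants c_{i,j} invertible; they are moreover required to lie in R_0
and the relations to lie in R_2 + R_1 x1 + R_1 x2).\<close>
definition graded_skew_PBW2 ::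
  "('a,'b) ring_scheme \<Rightarrow> 'a set \<Rightarrow> 'a set \<Rightarrow> (nat \<Rightarrow> 'a set) \<Rightarrow> 'a \<Rightarrow> 'a \<Rightarrow> bool" where
  "graded_skew_PBW2 A K R Rg x1 x2 \<longleftrightarrow> skew_PBW2 A R x1 x2
   \<and> graded_alg A K R Rg
   \<and> (\<forall>xi\<in>{x1, x2}. bij_betw (pbw_sigma A R xi) R R)
   \<and> (\<forall>xi\<in>{x1, x2}. \<forall>m. \<forall>r\<in>Rg m. pbw_sigma A R xi r \<in> Rg m
                               \<and> pbw_delta A R xi r \<in> Rg (m + 1))
   \<and> (\<forall>xi\<in>{x1, x2}. \<forall>xj\<in>{x1, x2}. \<exists>c\<in>Rg 0 - {\<zero>\<^bsub>A\<^esub>}.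
          c \<in> Units (A\<lparr>carrier := R\<rparr>)
        \<and> xj \<otimes>\<^bsub>A\<^esub> xi \<ominus>\<^bsub>A\<^esub> c \<otimes>\<^bsub>A\<^esub> xi \<otimes>\<^bsub>A\<^esub> xj
            \<in> sum3 A (Rg 2) (lmul A (Rg 1) x1) (lmul A (Rg 1) x2))"

definition ext_grading :: "('a,'b) ring_scheme \<Rightarrow> 'a set \<Rightarrow> (nat \<Rightarrow> 'a set) \<Rightarrow> 'a \<Rightarrow> 'a \<Rightarrow> nat \<Rightarrow> 'a set" where
  "ext_grading A K Rg x1 x2 p =
     Kspan A K {r \<otimes>\<^bsub>A\<^esub> mono2 A x1 x2 (a, b) | r t a b. r \<in> Rg t \<and> t + a + b = p}"

definition connected_ext :: "('a,'b) ring_scheme \<Rightarrow> 'a set \<Rightarrow> (nat \<Rightarrow> 'a set) \<Rightarrow> 'a \<Rightarrow> 'a \<Rightarrow> bool" where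
  "connected_ext A K Rg x1 x2 \<longleftrightarrow> ext_grading A K Rg x1 x2 0 = K"

definition right_double_ore ::
  "('a,'b) ring_scheme \<Rightarrow> 'a set \<Rightarrow> 'a set \<Rightarrow> 'a \<Rightarrow> 'a \<Rightarrow> 'a \<Rightarrow> 'a \<Rightarrow> 'a \<Rightarrow> 'a \<Rightarrow> 'a \<Rightarrow> bool" where
  "right_double_ore A K R x1 x2 p12 p11 t0 t1 t2 \<longleftrightarrow>
     subring R A \<and> x1 \<in> carrier A \<and> x2 \<in> carrier A
   \<and> carrier A = generate_ring A (R \<union> {x1, x2})
   \<and> p12 \<in> K \<and> p11 \<in> K \<and> t0 \<in> R \<and> t1 \<in> R \<and> t2 \<in> R
   \<and> x2 \<otimes>\<^bsub>A\<^esub> x1 = p12 \<otimes>\<^bsub>A\<^esub> x1 \<otimes>\<^bsub>A\<^esub> x2 \<oplus>\<^bsub>A\<^esub> p11 \<otimes>\<^bsub>A\<^esub> x1 \<otimes>\<^bsub>A\<^esub> x1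
        \<oplus>\<^bsub>A\<^esub> t1 \<otimes>\<^bsub>A\<^esub> x1 \<oplus>\<^bsub>A\<^esub> t2 \<otimes>\<^bsub>A\<^esub> x2 \<oplus>\<^bsub>A\<^esub> t0
   \<and> left_free_mono_basis A R x1 x2
   \<and> (\<forall>r\<in>R. \<forall>s\<in>R. x1 \<otimes>\<^bsub>A\<^esub> r \<oplus>\<^bsub>A\<^esub> x2 \<otimes>\<^bsub>A\<^esub> s
                      \<in> sum3 A (lmul A R x1) (lmul A R x2) R)"

definition doe_sigma1 :: "('a,'b) ring_scheme \<Rightarrow> 'a set \<Rightarrow> 'a \<Rightarrow> 'a \<Rightarrow> 'a \<Rightarrow> 'a \<Rightarrow> 'a" where
  "doe_sigma1 A R x1 x2 xi r = (THE s. s \<in> R \<and> (\<exists>t\<in>R. \<exists>d\<in>R.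
      xi \<otimes>\<^bsub>A\<^esub> r = s \<otimes>\<^bsub>A\<^esub> x1 \<oplus>\<^bsub>A\<^esub> t \<otimes>\<^bsub>A\<^esub> x2 \<oplus>\<^bsub>A\<^esub> d))"

definition doe_sigma2 :: "('a,'b) ring_scheme \<Rightarrow> 'a set \<Rightarrow> 'a \<Rightarrow> 'a \<Rightarrow> 'a \<Rightarrow> 'a \<Rightarrow> 'a" where
  "doe_sigma2 A R x1 x2 xi r = (THE t. t \<in> R \<and> (\<exists>s\<in>R. \<exists>d\<in>R.
      xi \<otimes>\<^bsub>A\<^esub> r = s \<otimes>\<^bsub>A\<^esub> x1 \<oplus>\<^bsub>A\<^esub> t \<otimes>\<^bsub>A\<^esub> x2 \<oplus>\<^bsub>A\<^esub> d))"

definition doe_delta :: "('a,'b) ring_scheme \<Rightarrow> 'a set \<Rightarrow> 'a \<Rightarrow> 'a \<Rightarrow> 'a \<Rightarrow> 'a \<Rightarrow> 'a" where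
  "doe_delta A R x1 x2 xi r = (THE d. d \<in> R \<and> (\<exists>s\<in>R. \<exists>t\<in>R.
      xi \<otimes>\<^bsub>A\<^esub> r = s \<otimes>\<^bsub>A\<^esub> x1 \<oplus>\<^bsub>A\<^esub> t \<otimes>\<^bsub>A\<^esub> x2 \<oplus>\<^bsub>A\<^esub> d))"

definition trimmed_doe ::
  "('a,'b) ring_scheme \<Rightarrow> 'a set \<Rightarrow> 'a \<Rightarrow> 'a \<Rightarrow> 'a \<Rightarrow> 'a \<Rightarrow> 'a \<Rightarrow> bool" where
  "trimmed_doe A R x1 x2 t0 t1 t2 \<longleftrightarrow>
     (\<forall>xi\<in>{x1, x2}. \<forall>r\<in>R. doe_delta A R x1 x2 xi r = \<zero>\<^bsub>A\<^esub>)
   \<and> t0 = \<zero>\<^bsub>A\<^esub> \<and> t1 = \<zero>\<^bsub>A\<^esub> \<and> t2 = \<zero>\<^bsub>A\<^esub>"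

text \<open>Graded: all relations homogeneous, deg x1 = deg x2 = 1, R graded by Rg.\<close>
definition graded_doe ::
  "('a,'b) ring_scheme \<Rightarrow> 'a set \<Rightarrow> 'a set \<Rightarrow> (nat \<Rightarrow> 'a set) \<Rightarrow> 'a \<Rightarrow> 'a \<Rightarrow> 'a \<Rightarrow> 'a \<Rightarrow> 'a \<Rightarrow> bool" where
  "graded_doe A K R Rg x1 x2 t0 t1 t2 \<longleftrightarrow>
     graded_alg A K R Rg
   \<and> (\<forall>xi\<in>{x1, x2}. \<forall>m. \<forall>r\<in>Rg m.
          doe_sigma1 A R x1 x2 xi r \<in> Rg m \<and> doe_sigma2 A R x1 x2 xi r \<in> Rg m
        \<and> doe_delta A R x1 x2 xi r \<in> Rg (m + 1))
   \<and> t0 \<in> Rg 2 \<and> t1 \<in> Rg 1 \<and> t2 \<in> Rg 1"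

end

theory Submission
  imports Defs
begin

text \<open>Quasi-commutativity gives \<open>x2 x1 = c x1 x2\<close> with \<open>c \<in> R\<close>, while gradedness gives
  \<open>x2 x1 = c' x1 x2 + a + b x1 + d x2\<close> with \<open>c' \<in> R\<^sub>0\<close>. Comparing coefficients in the
  left \<open>R\<close>-basis of standard monomials forces \<open>c = c'\<close>, and connectedness (\<open>R\<^sub>0\<close> lies
  in \<open>A\<^sub>0 = K\<close>) puts \<open>c\<close> into \<open>K\<close>. So \<open>x2 x1 = c x1 x2\<close> is a double Ore relation with
  \<open>p11 = 0\<close> and all \<open>\<tau>\<close> zero, and each rule \<open>x\<^sub>i r = \<sigma>\<^sub>i(r) x\<^sub>i\<close> is a double Ore rule
  with vanishing cross terms and derivations; it is homogeneous because \<open>\<sigma>\<^sub>i\<close> is graded.\<close>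

context ring
begin

lemma mono2_closed [simp]:
  "x1 \<in> carrier R \<Longrightarrow> x2 \<in> carrier R \<Longrightarrow> mono2 R x1 x2 p \<in> carrier R"
  by (simp add: mono2_def)

lemma finsum_in_subring:
  assumes H: "subring H R" and "finite I" and "f \<in> I \<rightarrow> H"
  shows "(\<Oplus>i\<in>I. f i) \<in> H"
  using assms(2,3)
proof (induction I rule: finite_induct)
  case empty
  then show ?case using subringE(2)[OF H] by simp
next
  case (insert i I)
  have "f \<in> I \<rightarrow> carrier R" "f i \<in> carrier R"
    using insert.prems subringE(1)[OF H] by auto
  with insert show ?case using subringE(7)[OF H] by auto
qed

lemma nat_pow_in_subring:
  assumes H: "subring H R" and "x \<in> H"
  shows "x [^] (n::nat) \<in> H"
  by (induction n) (use assms subringE(3,6)[OF H] in auto)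

lemma left_free_mono_basis_coeffs_unique:
  assumes basis: "left_free_mono_basis R S x1 x2" and S: "S \<subseteq> carrier R"
    and x: "x1 \<in> carrier R" "x2 \<in> carrier R"
    and f: "f \<in> UNIV \<rightarrow> S" and g: "g \<in> UNIV \<rightarrow> S" and "finite P"
    and f0: "\<And>p. p \<notin> P \<Longrightarrow> f p = \<zero>" and g0: "\<And>p. p \<notin> P \<Longrightarrow> g p = \<zero>"
    and eq: "(\<Oplus>p\<in>P. f p \<otimes> mono2 R x1 x2 p) = (\<Oplus>p\<in>P. g p \<otimes> mono2 R x1 x2 p)"
  shows "f = g"
proof -
  have sum_support: "(\<Oplus>p\<in>P. h p \<otimes> mono2 R x1 x2 p) = (\<Oplus>p\<in>{p. h p \<noteq> \<zero>}. h p \<otimes> mono2 R x1 x2 p)"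
    and support_finite: "finite {p. h p \<noteq> \<zero>}"
    if "h \<in> UNIV \<rightarrow> S" and "\<And>p. p \<notin> P \<Longrightarrow> h p = \<zero>" for h
  proof -
    have "\<And>p. h p \<in> carrier R" using that S by auto
    then show "(\<Oplus>p\<in>P. h p \<otimes> mono2 R x1 x2 p) = (\<Oplus>p\<in>{p. h p \<noteq> \<zero>}. h p \<otimes> mono2 R x1 x2 p)"
      using \<open>finite P\<close> that x by (intro add.finprod_mono_neutral_cong_right) (auto, metis)
    show "finite {p. h p \<noteq> \<zero>}"
      using that(2) by (intro finite_subset[OF _ \<open>finite P\<close>]) auto
  qed
  define z where "z = (\<Oplus>p\<in>P. f p \<otimes> mono2 R x1 x2 p)"
  have "z \<in> carrier R"
    unfolding z_def using f S x by (intro finsum_closed) force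
  then have "\<exists>!c. c \<in> UNIV \<rightarrow> S \<and> finite {p. c p \<noteq> \<zero>}
               \<and> z = (\<Oplus>p\<in>{p. c p \<noteq> \<zero>}. c p \<otimes> mono2 R x1 x2 p)"
    using basis unfolding left_free_mono_basis_def by blast
  moreover have "z = (\<Oplus>p\<in>{p. f p \<noteq> \<zero>}. f p \<otimes> mono2 R x1 x2 p)"
    unfolding z_def using sum_support[OF f f0] .
  moreover have "z = (\<Oplus>p\<in>{p. g p \<noteq> \<zero>}. g p \<otimes> mono2 R x1 x2 p)"
    unfolding z_def eq using sum_support[OF g g0] .
  ultimately show ?thesis
    using f g support_finite[OF f f0] support_finite[OF g g0] by blast
qed

lemma left_free_mono_basis_unique_multilinear:
  assumes basis: "left_free_mono_basis R S x1 x2" and S: "S \<subseteq> carrier R" "\<zero> \<in> S"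
    and x: "x1 \<in> carrier R" "x2 \<in> carrier R"
    and coeffs: "a \<in> S" "b \<in> S" "c \<in> S" "d \<in> S" "a' \<in> S" "b' \<in> S" "c' \<in> S" "d' \<in> S"
    and eq: "a \<oplus> b \<otimes> x1 \<oplus> c \<otimes> x2 \<oplus> d \<otimes> (x1 \<otimes> x2)
           = a' \<oplus> b' \<otimes> x1 \<oplus> c' \<otimes> x2 \<oplus> d' \<otimes> (x1 \<otimes> x2)"
  shows "a = a' \<and> b = b' \<and> c = c' \<and> d = d'"
proof -
  define P :: "(nat \<times> nat) set" where "P = {(0,0), (1,0), (0,1), (1,1)}"
  define F where "F a b c d p = (if p = (0,0) then a else if p = (1,0) then b
     else if p = (0,1) then c else if p = (1,1) then d else \<zero>)" for a b c d and p :: "nat \<times> nat"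
  have sum: "(\<Oplus>p\<in>P. F a b c d p \<otimes> mono2 R x1 x2 p) = a \<oplus> b \<otimes> x1 \<oplus> c \<otimes> x2 \<oplus> d \<otimes> (x1 \<otimes> x2)"
    if "a \<in> carrier R" "b \<in> carrier R" "c \<in> carrier R" "d \<in> carrier R" for a b c d
    using that x by (simp add: P_def F_def mono2_def a_ac)
  have "F a b c d = F a' b' c' d'"
    using coeffs S x eq
    by (intro left_free_mono_basis_coeffs_unique[OF basis S(1) x, where P = P])
       (auto simp: sum subsetD, auto simp: P_def F_def)
  then show ?thesis
    by (metis F_def prod.inject zero_neq_one)
qed

lemma left_free_mono_basis_unique_affine:
  assumes basis: "left_free_mono_basis R S x1 x2" and S: "S \<subseteq> carrier R" "\<zero> \<in> S"
    and x: "x1 \<in> carrier R" "x2 \<in> carrier R"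
    and coeffs: "b \<in> S" "c \<in> S" "a \<in> S" "b' \<in> S" "c' \<in> S" "a' \<in> S"
    and eq: "b \<otimes> x1 \<oplus> c \<otimes> x2 \<oplus> a = b' \<otimes> x1 \<oplus> c' \<otimes> x2 \<oplus> a'"
  shows "b = b' \<and> c = c' \<and> a = a'"
proof -
  have "a \<oplus> b \<otimes> x1 \<oplus> c \<otimes> x2 \<oplus> \<zero> \<otimes> (x1 \<otimes> x2) = a' \<oplus> b' \<otimes> x1 \<oplus> c' \<otimes> x2 \<oplus> \<zero> \<otimes> (x1 \<otimes> x2)"
    using eq coeffs S x by (simp add: subsetD a_ac)
  from left_free_mono_basis_unique_multilinear[OF basis S x coeffs(3,1,2) S(2) coeffs(6,4,5) S(2) this]
  show ?thesis by simp
qed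

lemma left_free_mono_basis_unique_var:
  assumes basis: "left_free_mono_basis R S x1 x2" and S: "S \<subseteq> carrier R" "\<zero> \<in> S"
    and x: "x1 \<in> carrier R" "x2 \<in> carrier R" and xi: "xi \<in> {x1, x2}"
    and coeffs: "s \<in> S" "e \<in> S" "s' \<in> S" "e' \<in> S"
    and eq: "s \<otimes> xi \<oplus> e = s' \<otimes> xi \<oplus> e'"
  shows "s = s' \<and> e = e'"
proof -
  have carrier: "s \<in> carrier R" "e \<in> carrier R" "s' \<in> carrier R" "e' \<in> carrier R"
    using coeffs S by auto
  from xi consider "xi = x1" | "xi = x2" by blast
  then show ?thesis
  proof cases
    case 1
    with eq carrier x have "s \<otimes> x1 \<oplus> \<zero> \<otimes> x2 \<oplus> e = s' \<otimes> x1 \<oplus> \<zero> \<otimes> x2 \<oplus> e'"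
      by simp
    from left_free_mono_basis_unique_affine[OF basis S x coeffs(1) S(2) coeffs(2,3) S(2) coeffs(4) this]
    show ?thesis by simp
  next
    case 2
    with eq carrier x have "\<zero> \<otimes> x1 \<oplus> s \<otimes> x2 \<oplus> e = \<zero> \<otimes> x1 \<oplus> s' \<otimes> x2 \<oplus> e'"
      by simp
    from left_free_mono_basis_unique_affine[OF basis S x S(2) coeffs(1,2) S(2) coeffs(3,4) this]
    show ?thesis by simp
  qed
qed

lemma doe_sigma_delta_eqI:
  assumes basis: "left_free_mono_basis R S x1 x2" and S: "S \<subseteq> carrier R" "\<zero> \<in> S"
    and x: "x1 \<in> carrier R" "x2 \<in> carrier R"
    and coeffs: "s \<in> S" "t \<in> S" "d \<in> S"
    and eq: "xi \<otimes> r = s \<otimes> x1 \<oplus> t \<otimes> x2 \<oplus> d"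
  shows "doe_sigma1 R S x1 x2 xi r = s" "doe_sigma2 R S x1 x2 xi r = t"
    "doe_delta R S x1 x2 xi r = d"
proof -
  have unique: "s' = s \<and> t' = t \<and> d' = d"
    if "s' \<in> S" "t' \<in> S" "d' \<in> S" "xi \<otimes> r = s' \<otimes> x1 \<oplus> t' \<otimes> x2 \<oplus> d'" for s' t' d'
    using left_free_mono_basis_unique_affine[OF basis S x that(1-3) coeffs] that(4) eq by simp
  show "doe_sigma1 R S x1 x2 xi r = s" "doe_sigma2 R S x1 x2 xi r = t"
    "doe_delta R S x1 x2 xi r = d"
    unfolding doe_sigma1_def doe_sigma2_def doe_delta_def
    by (rule the_equality; use coeffs eq unique in blast)+
qed

lemma pbw_sigma_eqI:
  assumes basis: "left_free_mono_basis R S x1 x2" and S: "S \<subseteq> carrier R" "\<zero> \<in> S"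
    and x: "x1 \<in> carrier R" "x2 \<in> carrier R" and xi: "xi \<in> {x1, x2}"
    and c: "c \<in> S" and r: "r \<in> carrier R" and eq: "xi \<otimes> r = c \<otimes> xi"
  shows "pbw_sigma R S xi r = c"
  unfolding pbw_sigma_def
proof (rule the_equality)
  have xi_carrier: "xi \<in> carrier R" using xi x by auto
  show "c \<in> S \<and> xi \<otimes> r \<ominus> c \<otimes> xi \<in> S"
    using c S eq xi_carrier by (simp add: subsetD a_minus_def r_neg)
  fix s assume "s \<in> S \<and> xi \<otimes> r \<ominus> s \<otimes> xi \<in> S"
  then have s: "s \<in> S" "xi \<otimes> r \<ominus> s \<otimes> xi \<in> S" by auto
  have "s \<in> carrier R" "c \<in> carrier R" using s(1) c S by auto
  with eq xi_carrier have "s \<otimes> xi \<oplus> (xi \<otimes> r \<ominus> s \<otimes> xi) = c \<otimes> xi \<oplus> \<zero>"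
    by (simp add: a_minus_def a_comm[of "c \<otimes> xi"] r_neg2)
  from left_free_mono_basis_unique_var[OF basis S x xi s c S(2) this]
  show "s = c" by simp
qed

lemma left_free_mono_basis_generate_ring:
  assumes basis: "left_free_mono_basis R S x1 x2" and S: "S \<subseteq> carrier R"
    and x: "x1 \<in> carrier R" "x2 \<in> carrier R"
  shows "carrier R = generate_ring R (S \<union> {x1, x2})"
proof
  let ?G = "generate_ring R (S \<union> {x1, x2})"
  have gens: "S \<union> {x1, x2} \<subseteq> carrier R" using S x by auto
  then show "?G \<subseteq> carrier R" by (rule generate_ring_incl)
  have G: "subring ?G R" using gens by (rule generate_ring_is_subring)
  have mono2_in_G: "mono2 R x1 x2 p \<in> ?G" for p
    unfolding mono2_def
    by (intro subringE(6)[OF G] nat_pow_in_subring[OF G]) (auto intro: generate_ring.incl)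
  show "carrier R \<subseteq> ?G"
  proof
    fix z assume "z \<in> carrier R"
    then obtain f where f: "f \<in> UNIV \<rightarrow> S" "finite {p. f p \<noteq> \<zero>}"
      and z: "z = (\<Oplus>p\<in>{p. f p \<noteq> \<zero>}. f p \<otimes> mono2 R x1 x2 p)"
      using basis unfolding left_free_mono_basis_def by blast
    have "f p \<in> ?G" for p using f(1) by (auto intro: generate_ring.incl)
    then show "z \<in> ?G"
      unfolding z using mono2_in_G subringE(6)[OF G] by (intro finsum_in_subring[OF G f(2)]) auto
  qed
qed

lemma connected_ext_degree_zero_subset:
  assumes "connected_ext R K Rg x1 x2" and "\<one> \<in> K" and "Rg 0 \<subseteq> carrier R"
    and x: "x1 \<in> carrier R" "x2 \<in> carrier R"
  shows "Rg 0 \<subseteq> K"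
proof
  fix r assume r: "r \<in> Rg 0"
  have "r = (\<Oplus>i\<in>{0::nat}. \<one> \<otimes> (r \<otimes> mono2 R x1 x2 (0, 0)))"
    using r assms(3) x by (auto simp: mono2_def)
  then have "r \<in> ext_grading R K Rg x1 x2 0"
    unfolding ext_grading_def Kspan_def using r \<open>\<one> \<in> K\<close> by fastforce
  then show "r \<in> K"
    using assms(1) unfolding connected_ext_def by simp
qed

lemma quasi_commutative_PBW2D:
  assumes "quasi_commutative_PBW2 R S x1 x2"
  shows "subring S R" "left_free_mono_basis R S x1 x2" "x1 \<in> carrier R" "x2 \<in> carrier R"
    and "S \<subseteq> carrier R" "\<zero> \<in> S"
proof -
  have "skew_PBW2 R S x1 x2"
    using assms unfolding quasi_commutative_PBW2_def by (rule conjunct1)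
  then show "subring S R" "left_free_mono_basis R S x1 x2" "x1 \<in> carrier R" "x2 \<in> carrier R"
    unfolding skew_PBW2_def by simp_all
  then show "S \<subseteq> carrier R" "\<zero> \<in> S"
    using subringE(1,2) by blast+
qed

lemma quasi_commutative_PBW2_commute:
  assumes qc: "quasi_commutative_PBW2 R S x1 x2" and xi: "xi \<in> {x1, x2}" and r: "r \<in> S"
  shows "\<exists>c\<in>S. xi \<otimes> r = c \<otimes> xi"
proof (cases "r = \<zero>")
  case True
  have "xi \<in> carrier R" using xi quasi_commutative_PBW2D(3,4)[OF qc] by blast
  with True quasi_commutative_PBW2D(6)[OF qc] show ?thesis by force
next
  case False
  with qc xi r show ?thesis unfolding quasi_commutative_PBW2_def by blast
qed

text \<open>The case split on \<open>xi = x1\<close> avoids assuming \<open>x1 \<noteq> x2\<close>.\<close>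

lemma quasi_commutative_PBW2_doe_coeffs:
  assumes qc: "quasi_commutative_PBW2 R S x1 x2" and xi: "xi \<in> {x1, x2}" and r: "r \<in> S"
  shows "doe_sigma1 R S x1 x2 xi r = (if xi = x1 then pbw_sigma R S xi r else \<zero>)"
    and "doe_sigma2 R S x1 x2 xi r = (if xi = x1 then \<zero> else pbw_sigma R S xi r)"
    and "doe_delta R S x1 x2 xi r = \<zero>"
proof -
  note basis = quasi_commutative_PBW2D(2)[OF qc] and x = quasi_commutative_PBW2D(3,4)[OF qc]
    and S = quasi_commutative_PBW2D(5,6)[OF qc]
  obtain c where c: "c \<in> S" "xi \<otimes> r = c \<otimes> xi"
    using quasi_commutative_PBW2_commute[OF qc xi r] by blast
  have carrier: "c \<in> carrier R" "r \<in> carrier R" using c r S by auto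
  have sigma: "pbw_sigma R S xi r = c"
    using pbw_sigma_eqI[OF basis S x xi c(1) carrier(2) c(2)] .
  consider "xi = x1" | "xi \<noteq> x1" "xi = x2" using xi by blast
  then have "doe_sigma1 R S x1 x2 xi r = (if xi = x1 then c else \<zero>)
    \<and> doe_sigma2 R S x1 x2 xi r = (if xi = x1 then \<zero> else c) \<and> doe_delta R S x1 x2 xi r = \<zero>"
  proof cases
    case 1
    with c carrier x have "xi \<otimes> r = c \<otimes> x1 \<oplus> \<zero> \<otimes> x2 \<oplus> \<zero>" by simp
    with 1 show ?thesis using doe_sigma_delta_eqI[OF basis S x c(1) S(2) S(2)] by simp
  next
    case 2
    with c carrier x have "xi \<otimes> r = \<zero> \<otimes> x1 \<oplus> c \<otimes> x2 \<oplus> \<zero>" by simp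
    with 2 show ?thesis using doe_sigma_delta_eqI[OF basis S x S(2) c(1) S(2)] by simp
  qed
  then show "doe_sigma1 R S x1 x2 xi r = (if xi = x1 then pbw_sigma R S xi r else \<zero>)"
    and "doe_sigma2 R S x1 x2 xi r = (if xi = x1 then \<zero> else pbw_sigma R S xi r)"
    and "doe_delta R S x1 x2 xi r = \<zero>"
    unfolding sigma by blast+
qed

lemma quasi_commutative_PBW2_trimmed_doe:
  assumes "quasi_commutative_PBW2 R S x1 x2"
  shows "trimmed_doe R S x1 x2 \<zero> \<zero> \<zero>"
  using quasi_commutative_PBW2_doe_coeffs(3)[OF assms] unfolding trimmed_doe_def by blast

lemma quasi_commutative_PBW2_graded_doe:
  assumes qc: "quasi_commutative_PBW2 R S x1 x2"
    and graded: "graded_skew_PBW2 R K S Rg x1 x2"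
  shows "graded_doe R K S Rg x1 x2 \<zero> \<zero> \<zero>"
proof -
  have alg: "graded_alg R K S Rg" using graded unfolding graded_skew_PBW2_def by blast
  then have Rg: "Rg n \<subseteq> S" "\<zero> \<in> Rg n" for n unfolding graded_alg_def by auto
  have sigma: "pbw_sigma R S xi r \<in> Rg m" if "xi \<in> {x1, x2}" "r \<in> Rg m" for xi r m
    using graded that unfolding graded_skew_PBW2_def by blast
  show ?thesis unfolding graded_doe_def
  proof (intro conjI ballI allI)
    fix xi m r assume xi: "xi \<in> {x1, x2}" and r: "r \<in> Rg m"
    then have "r \<in> S" using Rg(1) by blast
    note coeffs = quasi_commutative_PBW2_doe_coeffs[OF qc xi this]
    show "doe_sigma1 R S x1 x2 xi r \<in> Rg m" "doe_sigma2 R S x1 x2 xi r \<in> Rg m"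
      "doe_delta R S x1 x2 xi r \<in> Rg (m + 1)"
      using sigma[OF xi r] Rg(2) by (auto simp: coeffs)
  qed (use alg Rg(2) in auto)
qed

lemma quasi_commutative_PBW2_right_double_ore:
  assumes qc: "quasi_commutative_PBW2 R S x1 x2" and "subfield K R" and "p12 \<in> K"
    and rel: "x2 \<otimes> x1 = p12 \<otimes> x1 \<otimes> x2"
  shows "right_double_ore R K S x1 x2 p12 \<zero> \<zero> \<zero> \<zero>"
  unfolding right_double_ore_def
proof (intro conjI ballI)
  note basis = quasi_commutative_PBW2D(2)[OF qc] and x = quasi_commutative_PBW2D(3,4)[OF qc]
    and S = quasi_commutative_PBW2D(5,6)[OF qc]
  have K: "K \<subseteq> carrier R" "\<zero> \<in> K"
    using subringE(1,2)[OF subfieldE(1)[OF \<open>subfield K R\<close>]] by simp_all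
  show "subring S R" "left_free_mono_basis R S x1 x2" "x1 \<in> carrier R" "x2 \<in> carrier R"
    "p12 \<in> K" "\<zero> \<in> K"
    using quasi_commutative_PBW2D[OF qc] K \<open>p12 \<in> K\<close> by simp_all
  show "carrier R = generate_ring R (S \<union> {x1, x2})"
    using left_free_mono_basis_generate_ring[OF basis S(1) x] .
  show "x2 \<otimes> x1 = p12 \<otimes> x1 \<otimes> x2 \<oplus> \<zero> \<otimes> x1 \<otimes> x1 \<oplus> \<zero> \<otimes> x1 \<oplus> \<zero> \<otimes> x2 \<oplus> \<zero>"
    using rel x K \<open>p12 \<in> K\<close> by (simp add: subsetD)
  fix r s assume "r \<in> S" "s \<in> S"
  then obtain c1 c2 where c: "c1 \<in> S" "x1 \<otimes> r = c1 \<otimes> x1" "c2 \<in> S" "x2 \<otimes> s = c2 \<otimes> x2"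
    using quasi_commutative_PBW2_commute[OF qc] by blast
  with S x have "x1 \<otimes> r \<oplus> x2 \<otimes> s = c1 \<otimes> x1 \<oplus> c2 \<otimes> x2 \<oplus> \<zero>"
    by (simp add: subsetD)
  with c S show "x1 \<otimes> r \<oplus> x2 \<otimes> s \<in> sum3 R (lmul R S x1) (lmul R S x2) S"
    unfolding sum3_def lmul_def by blast
qed (rule quasi_commutative_PBW2D(6)[OF qc])+

lemma graded_quasi_commutative_PBW2_relation:
  assumes qc: "quasi_commutative_PBW2 R S x1 x2"
    and graded: "graded_skew_PBW2 R K S Rg x1 x2"
  shows "\<exists>c\<in>Rg 0. x2 \<otimes> x1 = c \<otimes> x1 \<otimes> x2"
proof -
  note basis = quasi_commutative_PBW2D(2)[OF qc] and x = quasi_commutative_PBW2D(3,4)[OF qc]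
    and S = quasi_commutative_PBW2D(5,6)[OF qc]
  have Rg: "Rg n \<subseteq> S" for n
    using graded unfolding graded_skew_PBW2_def graded_alg_def by blast
  obtain c where c: "c \<in> S" "x2 \<otimes> x1 = c \<otimes> x1 \<otimes> x2"
    using qc unfolding quasi_commutative_PBW2_def by blast
  obtain c' a b d where c': "c' \<in> Rg 0" and abd: "a \<in> Rg 2" "b \<in> Rg 1" "d \<in> Rg 1"
    and rel: "x2 \<otimes> x1 \<ominus> c' \<otimes> x1 \<otimes> x2 = a \<oplus> b \<otimes> x1 \<oplus> d \<otimes> x2"
    using graded unfolding graded_skew_PBW2_def sum3_def lmul_def by blast
  have in_S: "c' \<in> S" "a \<in> S" "b \<in> S" "d \<in> S" using c' abd Rg by auto
  then have carrier: "c \<in> carrier R" "c' \<in> carrier R" "a \<in> carrier R" "b \<in> carrier R"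
    "d \<in> carrier R" using c S by auto
  have "x2 \<otimes> x1 = (a \<oplus> b \<otimes> x1 \<oplus> d \<otimes> x2) \<oplus> c' \<otimes> x1 \<otimes> x2"
    using rel[symmetric] carrier x by (auto simp: a_minus_def a_assoc l_neg)
  with c carrier x
  have "\<zero> \<oplus> \<zero> \<otimes> x1 \<oplus> \<zero> \<otimes> x2 \<oplus> c \<otimes> (x1 \<otimes> x2) = a \<oplus> b \<otimes> x1 \<oplus> d \<otimes> x2 \<oplus> c' \<otimes> (x1 \<otimes> x2)"
    by (simp add: m_assoc)
  from left_free_mono_basis_unique_multilinear[OF basis S x S(2) S(2) S(2) c(1) in_S(2,3,4,1) this]
  have "c = c'" by simp
  with c c' show ?thesis by blast
qed

end

theorem corollary3p3:
  fixes A :: "('a, 'b) ring_scheme" and K R :: "'a set" and Rg :: "nat \<Rightarrow> 'a set"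
    and x1 x2 :: 'a
  assumes "K_algebra_ext A K R"
    and "graded_alg A K R Rg"
    and "quasi_commutative_PBW2 A R x1 x2"
    and "graded_skew_PBW2 A K R Rg x1 x2"
    and "connected_ext A K Rg x1 x2"
  shows "\<exists>p12 p11 t0 t1 t2.
           right_double_ore A K R x1 x2 p12 p11 t0 t1 t2
         \<and> trimmed_doe A R x1 x2 t0 t1 t2
         \<and> graded_doe A K R Rg x1 x2 t0 t1 t2
         \<and> connected_ext A K Rg x1 x2"
proof -
  from assms(1) interpret ring A unfolding K_algebra_ext_def by blast
  have "subfield K A" and "subring R A"
    using assms(1) unfolding K_algebra_ext_def by simp_all
  then have "\<one>\<^bsub>A\<^esub> \<in> K"
    using subringE(3)[OF subfieldE(1)] by blast
  have "Rg 0 \<subseteq> carrier A"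
    using assms(2) subringE(1)[OF \<open>subring R A\<close>] unfolding graded_alg_def by blast
  with quasi_commutative_PBW2D(3,4)[OF assms(3)] have "Rg 0 \<subseteq> K"
    using connected_ext_degree_zero_subset[OF assms(5) \<open>\<one>\<^bsub>A\<^esub> \<in> K\<close>] by blast
  then obtain c where "c \<in> K" "x2 \<otimes>\<^bsub>A\<^esub> x1 = c \<otimes>\<^bsub>A\<^esub> x1 \<otimes>\<^bsub>A\<^esub> x2"
    using graded_quasi_commutative_PBW2_relation[OF assms(3,4)] by blast
  then show ?thesis
    using quasi_commutative_PBW2_right_double_ore[OF assms(3) \<open>subfield K A\<close>]
      quasi_commutative_PBW2_trimmed_doe[OF assms(3)]
      quasi_commutative_PBW2_graded_doe[OF assms(3,4)] assms(5)
    by blast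
qed

end
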